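(* In an $m$-partial SCS, let $r$ and $r'$ be rings (not necessarily distinct) that cross each other at a crossing point $c$, and let $u$ and $u'$ be robots in $r$ and $r'$, respectively. If there are two paths of equal length, one from $u$ to $c$ in $r$ and one from $u'$ to $c$ in $r'$ (each possibly longer than its ring), then neither $u$ nor $u'$ is starving.
   Context: Let $T=\{C_1,\dots,C_n\}$ be pairwise disjoint unit circles in the plane (trajectories) and $\epsilon<0.5$ a communication range. The graph of potential links $G_\epsilon(T)$ has the circle centers as nodes and an edge $\{i,j\}$ whenever the centers of $C_i,C_j$ are at distance at most $2+\epsilon$; it is assumed connected. Points of a circle are identified with angles (modulo $2\pi$), and a robot traverses a circle in one time unit. A schedule is a pair $(f,g)$, $f:T\to[0,2\pi)$, $g:T\to\{-1,1\}$ ($1$ = counterclockwise); the robot on $C_i$ is at angle $f(C_i)+2\pi g(C_i)t$ at time $t$. A communication graph $G=(V,E)$ is a connected spanning subgraph of $G_\epsilon(T)$. The link position $\phi_{ij}$ is the point of $C_i$ closest to $C_j$. A schedule is $G$-synchronized if for every $\{i,j\}\in E$ the robot on $C_i$ is at $\phi_{ij}$ exactly when the robot on $C_j$ is at $\phi_{ji}$. An SCS with communication graph $G$ consists of $n$ robots, one per circle, moving under a $G$-synchronized schedule with $g(C_i)=-g(C_j)$ for all $\{i,j\}\in E$. Shifting protocol: when a robot on $C_i$ reaches $\phi_{ij}$ and there is no robot at $\phi_{ji}$, it moves to $C_j$ and thereafter follows the schedule of $C_j$. An $m$-partial SCS is obtained by removing $n-m$ robots, the remaining $m$ applying the shifting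 protocol. A surviving robot starves if every time it arrives at a link position the corresponding neighbor is absent. A ring is the closed path traversed by a starving robot (following the assigned direction on each circle and always shifting to the neighboring circle at link positions). The length of a path along a ring is the total length of circle arcs it traverses, with multiplicity, ignoring transitions between circles; a path in a ring follows the travel direction of the ring and may contain full tours. The crossing point of neighboring circles $C_i,C_j$ is the midpoint of the segment joining $\phi_{ij}$ and $\phi_{ji}$; rings pass through crossing points. *)

theory Defs
  imports Complex_Main
begin

text \<open>The plane is the complex plane. Trajectories are the unit circles with
  centers cen 0, ..., cen (n-1). Points of circle i are cen i + cis a.\<close>

definition potential_link :: "nat \<Rightarrow> (nat \<Rightarrow> complex) \<Rightarrow> real \<Rightarrow> nat \<Rightarrow> nat \<Rightarrow> bool" where
  "potential_link n cen \<epsilon> i j \<longleftrightarrow> i < n \<and> j < n \<and> i \<noteq> j \<and> cmod (cen i - cen j) \<le> 2 + \<epsilon>"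

definition graph_connected :: "nat \<Rightarrow> (nat \<Rightarrow> nat \<Rightarrow> bool) \<Rightarrow> bool" where
  "graph_connected n R \<longleftrightarrow> (\<forall>i<n. \<forall>j<n. R\<^sup>*\<^sup>* i j)"

definition trajectories_ok :: "nat \<Rightarrow> (nat \<Rightarrow> complex) \<Rightarrow> real \<Rightarrow> bool" where
  "trajectories_ok n cen \<epsilon> \<longleftrightarrow>
     (\<forall>i<n. \<forall>j<n. i \<noteq> j \<longrightarrow> 2 < cmod (cen i - cen j)) \<and> \<epsilon> < 1/2 \<and>
     graph_connected n (potential_link n cen \<epsilon>)"

definition comm_graph :: "nat \<Rightarrow> (nat \<Rightarrow> complex) \<Rightarrow> real \<Rightarrow> (nat \<Rightarrow> nat \<Rightarrow> bool) \<Rightarrow> bool" where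
  "comm_graph n cen \<epsilon> E \<longleftrightarrow>
     (\<forall>i j. E i j \<longrightarrow> potential_link n cen \<epsilon> i j) \<and> (\<forall>i j. E i j \<longrightarrow> E j i) \<and>
     graph_connected n E"

text \<open>Link position phi_ij: the point of C_i closest to C_j.\<close>
definition link_pt :: "(nat \<Rightarrow> complex) \<Rightarrow> nat \<Rightarrow> nat \<Rightarrow> complex" where
  "link_pt cen i j = cen i + sgn (cen j - cen i)"

definition cross_pt :: "(nat \<Rightarrow> complex) \<Rightarrow> nat \<Rightarrow> nat \<Rightarrow> complex" where
  "cross_pt cen i j = (link_pt cen i j + link_pt cen j i) / 2"

definition rpos :: "(nat \<Rightarrow> complex) \<Rightarrow> (nat \<Rightarrow> real) \<Rightarrow> (nat \<Rightarrow> int) \<Rightarrow> nat \<Rightarrow> real \<Rightarrow> complex" where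
  "rpos cen f g i t = cen i + cis (f i + 2 * pi * of_int (g i) * t)"

definition schedule :: "nat \<Rightarrow> (nat \<Rightarrow> real) \<Rightarrow> (nat \<Rightarrow> int) \<Rightarrow> bool" where
  "schedule n f g \<longleftrightarrow> (\<forall>i<n. 0 \<le> f i \<and> f i < 2 * pi \<and> (g i = 1 \<or> g i = -1))"

definition synchronized ::
  "(nat \<Rightarrow> complex) \<Rightarrow> (nat \<Rightarrow> nat \<Rightarrow> bool) \<Rightarrow> (nat \<Rightarrow> real) \<Rightarrow> (nat \<Rightarrow> int) \<Rightarrow> bool" where
  "synchronized cen E f g \<longleftrightarrow>
     (\<forall>i j. E i j \<longrightarrow> (\<forall>t. rpos cen f g i t = link_pt cen i j \<longleftrightarrow> rpos cen f g j t = link_pt cen j i))"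

text \<open>The data of an SCS with communication graph E (the robots are handled by the runs below).\<close>
definition scs ::
  "nat \<Rightarrow> (nat \<Rightarrow> complex) \<Rightarrow> real \<Rightarrow> (nat \<Rightarrow> nat \<Rightarrow> bool) \<Rightarrow> (nat \<Rightarrow> real) \<Rightarrow> (nat \<Rightarrow> int) \<Rightarrow> bool" where
  "scs n cen \<epsilon> E f g \<longleftrightarrow>
     trajectories_ok n cen \<epsilon> \<and> comm_graph n cen \<epsilon> E \<and> schedule n f g \<and>
     synchronized cen E f g \<and> (\<forall>i j. E i j \<longrightarrow> g i = - g j)"

definition at_link ::
  "(nat \<Rightarrow> complex) \<Rightarrow> (nat \<Rightarrow> nat \<Rightarrow> bool) \<Rightarrow> (nat \<Rightarrow> real) \<Rightarrow> (nat \<Rightarrow> int) \<Rightarrow> nat \<Rightarrow> real \<Rightarrow> nat \<Rightarrow> bool" where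
  "at_link cen E f g i t j \<longleftrightarrow> E i j \<and> rpos cen f g i t = link_pt cen i j"

text \<open>A run of a partial SCS with robot set U applying the shifting protocol from time 0.
  loc u t is the circle robot u is on at time t; it is piecewise constant and
  left-continuous (at an event time it is the circle before shifting); immediately after
  time t the robot is on the circle prescribed by the shifting protocol.\<close>
definition partial_run ::
  "nat \<Rightarrow> (nat \<Rightarrow> complex) \<Rightarrow> (nat \<Rightarrow> nat \<Rightarrow> bool) \<Rightarrow> (nat \<Rightarrow> real) \<Rightarrow> (nat \<Rightarrow> int) \<Rightarrow>
   'r set \<Rightarrow> ('r \<Rightarrow> real \<Rightarrow> nat) \<Rightarrow> bool" where
  "partial_run n cen E f g U loc \<longleftrightarrow> finite U \<and>
     (\<forall>t\<ge>0. inj_on (\<lambda>u. loc u t) U \<and> (\<forall>u\<in>U. loc u t < n)) \<and>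
     (\<forall>u\<in>U. \<forall>t>0. \<exists>\<delta>>0. \<forall>s. t - \<delta> < s \<and> s \<le> t \<longrightarrow> loc u s = loc u t) \<and>
     (\<forall>u\<in>U. \<forall>t\<ge>0. \<exists>\<delta>>0. \<forall>s. t < s \<and> s \<le> t + \<delta> \<longrightarrow>
        (if \<exists>j. at_link cen E f g (loc u t) t j \<and> (\<forall>v\<in>U. loc v t \<noteq> j)
         then at_link cen E f g (loc u t) t (loc u s) \<and> (\<forall>v\<in>U. loc v t \<noteq> loc u s)
         else loc u s = loc u t))"

definition partial_scs ::
  "nat \<Rightarrow> nat \<Rightarrow> (nat \<Rightarrow> complex) \<Rightarrow> real \<Rightarrow> (nat \<Rightarrow> nat \<Rightarrow> bool) \<Rightarrow> (nat \<Rightarrow> real) \<Rightarrow> (nat \<Rightarrow> int) \<Rightarrow>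
   'r set \<Rightarrow> ('r \<Rightarrow> real \<Rightarrow> nat) \<Rightarrow> bool" where
  "partial_scs m n cen \<epsilon> E f g U loc \<longleftrightarrow>
     scs n cen \<epsilon> E f g \<and> partial_run n cen E f g U loc \<and> card U = m \<and> m \<le> n"

definition starving ::
  "(nat \<Rightarrow> complex) \<Rightarrow> (nat \<Rightarrow> nat \<Rightarrow> bool) \<Rightarrow> (nat \<Rightarrow> real) \<Rightarrow> (nat \<Rightarrow> int) \<Rightarrow>
   'r set \<Rightarrow> ('r \<Rightarrow> real \<Rightarrow> nat) \<Rightarrow> 'r \<Rightarrow> bool" where
  "starving cen E f g U loc u \<longleftrightarrow>
     (\<forall>t\<ge>0. \<forall>j. at_link cen E f g (loc u t) t j \<longrightarrow> (\<forall>v\<in>U. loc v t \<noteq> j))"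

text \<open>The motion, from time t0 on, of a robot that always shifts at link positions
  (the motion of a starving robot): w t is its circle at time t.\<close>
definition ring_walk ::
  "nat \<Rightarrow> (nat \<Rightarrow> complex) \<Rightarrow> (nat \<Rightarrow> nat \<Rightarrow> bool) \<Rightarrow> (nat \<Rightarrow> real) \<Rightarrow> (nat \<Rightarrow> int) \<Rightarrow>
   (real \<Rightarrow> nat) \<Rightarrow> real \<Rightarrow> bool" where
  "ring_walk n cen E f g w t0 \<longleftrightarrow>
     (\<forall>t\<ge>t0. w t < n) \<and>
     (\<forall>t>t0. \<exists>\<delta>>0. \<forall>s. t - \<delta> < s \<and> s \<le> t \<longrightarrow> w s = w t) \<and>
     (\<forall>t\<ge>t0. \<exists>\<delta>>0. \<forall>s. t < s \<and> s \<le> t + \<delta> \<longrightarrow>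
        (if \<exists>j. at_link cen E f g (w t) t j
         then at_link cen E f g (w t) t (w s)
         else w s = w t))"

definition ring_of ::
  "(nat \<Rightarrow> complex) \<Rightarrow> (nat \<Rightarrow> real) \<Rightarrow> (nat \<Rightarrow> int) \<Rightarrow> (real \<Rightarrow> nat) \<Rightarrow> real \<Rightarrow> complex set" where
  "ring_of cen f g w t0 = {rpos cen f g (w t) t | t. t \<ge> t0}"

definition is_ring ::
  "nat \<Rightarrow> (nat \<Rightarrow> complex) \<Rightarrow> (nat \<Rightarrow> nat \<Rightarrow> bool) \<Rightarrow> (nat \<Rightarrow> real) \<Rightarrow> (nat \<Rightarrow> int) \<Rightarrow>
   complex set \<Rightarrow> bool" where
  "is_ring n cen E f g r \<longleftrightarrow> (\<exists>w t0. ring_walk n cen E f g w t0 \<and> r = ring_of cen f g w t0)"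

definition ring_passes ::
  "nat \<Rightarrow> (nat \<Rightarrow> complex) \<Rightarrow> (nat \<Rightarrow> nat \<Rightarrow> bool) \<Rightarrow> (nat \<Rightarrow> real) \<Rightarrow> (nat \<Rightarrow> int) \<Rightarrow>
   complex set \<Rightarrow> nat \<Rightarrow> nat \<Rightarrow> bool" where
  "ring_passes n cen E f g r i j \<longleftrightarrow>
     (\<exists>w t0 t. ring_walk n cen E f g w t0 \<and> r = ring_of cen f g w t0 \<and> t0 \<le> t \<and>
        w t = i \<and> at_link cen E f g i t j)"

definition rings_cross_at ::
  "nat \<Rightarrow> (nat \<Rightarrow> complex) \<Rightarrow> (nat \<Rightarrow> nat \<Rightarrow> bool) \<Rightarrow> (nat \<Rightarrow> real) \<Rightarrow> (nat \<Rightarrow> int) \<Rightarrow>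
   complex set \<Rightarrow> complex set \<Rightarrow> nat \<Rightarrow> nat \<Rightarrow> complex \<Rightarrow> bool" where
  "rings_cross_at n cen E f g r r' i j c \<longleftrightarrow>
     E i j \<and> c = cross_pt cen i j \<and> ring_passes n cen E f g r i j \<and> ring_passes n cen E f g r' j i"

text \<open>The path is traversed by an always-shifting robot; since it moves along unit circles
  with angular speed 2 pi, arc length L corresponds to elapsed time L / (2 pi)
  (transitions between circles contribute no length).  Full tours are allowed.\<close>
definition path_to_crossing ::
  "nat \<Rightarrow> (nat \<Rightarrow> complex) \<Rightarrow> (nat \<Rightarrow> nat \<Rightarrow> bool) \<Rightarrow> (nat \<Rightarrow> real) \<Rightarrow> (nat \<Rightarrow> int) \<Rightarrow>
   complex set \<Rightarrow> nat \<Rightarrow> real \<Rightarrow> real \<Rightarrow> nat \<Rightarrow> nat \<Rightarrow> bool" where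
  "path_to_crossing n cen E f g r i0 t0 L i j \<longleftrightarrow> 0 \<le> L \<and>
     (\<exists>w. ring_walk n cen E f g w t0 \<and> w t0 = i0 \<and>
        (\<forall>s. t0 \<le> s \<and> s \<le> t0 + L / (2 * pi) \<longrightarrow> rpos cen f g (w s) s \<in> r) \<and>
        w (t0 + L / (2 * pi)) = i \<and> at_link cen E f g i (t0 + L / (2 * pi)) j)"

end

theory Submission
  imports Defs
begin

text \<open>A starving robot never finds its neighbour present, so it shifts at every link position:
  it moves exactly like the always-shifting walk along its ring and therefore reaches
  \<open>\<phi>\<^sub>i\<^sub>j\<close> at time \<open>t\<^sub>0 + L/2\<pi>\<close>.  On the other hand the circle visited by an always-shifting walk
  that starts on an occupied circle stays occupied: when the walk shifts to a free circle,
  the robot it started with shifts too; when it shifts to an occupied circle, the robot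
  there does not move, because its only partner at that moment is the occupied circle
  the walk comes from.  Applied to the walk of \<open>u'\<close> along \<open>r'\<close>, circle \<open>C\<^sub>j\<close> is occupied at the
  moment \<open>u\<close> reaches \<open>\<phi>\<^sub>i\<^sub>j\<close>, so \<open>u\<close> does not starve; symmetrically for \<open>u'\<close>.
  Only the two paths enter the argument.\<close>

lemma at_link_unique:
  assumes "scs n cen \<epsilon> E f g" "at_link cen E f g a t j" "at_link cen E f g a t k"
  shows "j = k"
proof (rule ccontr)
  assume "j \<noteq> k"
  define x where "x = cen j - cen a"
  define y where "y = cen k - cen a"
  have "E a j" "E a k" and same_dir: "sgn x = sgn y"
    using assms(2,3) by (auto simp: at_link_def link_pt_def x_def y_def)
  then have "potential_link n cen \<epsilon> a j" "potential_link n cen \<epsilon> a k"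
    using assms(1) by (auto simp: scs_def comm_graph_def)
  moreover have "trajectories_ok n cen \<epsilon>"
    using assms(1) by (simp add: scs_def)
  ultimately have far: "2 < cmod (x - y)" and eps: "\<epsilon> < 1/2"
    and x: "2 < cmod x" "cmod x \<le> 2 + \<epsilon>" and y: "2 < cmod y" "cmod y \<le> 2 + \<epsilon>"
    using \<open>j \<noteq> k\<close> by (auto simp: trajectories_ok_def potential_link_def norm_minus_commute x_def y_def)
  \<comment> \<open>centres in the same direction from \<open>cen a\<close> are at most \<open>\<epsilon>\<close> apart\<close>
  have "x = cmod x *\<^sub>R sgn x" "y = cmod y *\<^sub>R sgn y"
    using x(1) y(1) by (auto simp: sgn_div_norm field_simps)
  then have "x - y = (cmod x - cmod y) *\<^sub>R sgn x"
    by (metis same_dir scaleR_diff_left)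
  then have "cmod (x - y) \<le> \<bar>cmod x - cmod y\<bar>"
    by (simp add: norm_sgn)
  then show False
    using far eps x y by linarith
qed

lemma at_link_sym:
  assumes "scs n cen \<epsilon> E f g" "at_link cen E f g a t b"
  shows "at_link cen E f g b t a"
  using assms unfolding scs_def comm_graph_def synchronized_def at_link_def by blast

lemma real_interval_induct:
  fixes P :: "real \<Rightarrow> bool" and a b :: real
  assumes "a \<le> b" "P a"
    and left: "\<And>t. a < t \<Longrightarrow> t \<le> b \<Longrightarrow> eventually P (at_left t) \<Longrightarrow> P t"
    and right: "\<And>t. a \<le> t \<Longrightarrow> t < b \<Longrightarrow> P t \<Longrightarrow> eventually P (at_right t)"
  shows "P b"
proof -
  define S where "S = {x. a \<le> x \<and> x \<le> b \<and> (\<forall>s. a \<le> s \<and> s \<le> x \<longrightarrow> P s)}"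
  define \<tau> where "\<tau> = Sup S"
  have "a \<in> S" and bdd: "bdd_above S"
    using assms(1,2) by (auto simp: S_def bdd_above_def)
  then have "a \<le> \<tau>" "\<tau> \<le> b"
    unfolding \<tau>_def by (auto intro: cSup_upper cSup_least simp: S_def)
  have below: "P s" if "a \<le> s" "s < \<tau>" for s
  proof -
    obtain x where "x \<in> S" "s < x"
      using \<open>s < \<tau>\<close> less_cSup_iff[OF _ bdd] \<open>a \<in> S\<close> by (auto simp: \<tau>_def)
    then show ?thesis
      using that by (auto simp: S_def)
  qed
  have "P \<tau>"
  proof (cases "\<tau> = a")
    case False
    then have "eventually P (at_left \<tau>)"
      using eventually_at_left_real[of a \<tau>] \<open>a \<le> \<tau>\<close> below
      by (auto elim: eventually_mono)
    then show ?thesis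
      using left False \<open>a \<le> \<tau>\<close> \<open>\<tau> \<le> b\<close> by simp
  qed (use assms(2) in simp)
  show ?thesis
  proof (rule ccontr)
    assume "\<not> P b"
    with \<open>P \<tau>\<close> \<open>\<tau> \<le> b\<close> have "\<tau> < b"
      by (cases "\<tau> = b") auto
    then obtain c where "\<tau> < c" and c: "\<And>s. \<tau> < s \<Longrightarrow> s < c \<Longrightarrow> P s"
      using right[OF \<open>a \<le> \<tau>\<close> _ \<open>P \<tau>\<close>] by (auto simp: eventually_at_right_field)
    define x where "x = min ((\<tau> + c) / 2) b"
    have "x \<in> S"
      using below \<open>P \<tau>\<close> c \<open>a \<le> \<tau>\<close> \<open>\<tau> < b\<close> \<open>\<tau> < c\<close> unfolding S_def x_def
      by (auto simp: not_le) (smt (verit) field_sum_of_halves)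
    then have "x \<le> \<tau>"
      using cSup_upper[OF _ bdd] by (simp add: \<tau>_def)
    then show False
      using \<open>\<tau> < b\<close> \<open>\<tau> < c\<close> by (auto simp: x_def min_le_iff_disj)
  qed
qed

lemma eventually_at_leftI_real:
  fixes t \<delta> :: real
  assumes "\<delta> > 0" "\<forall>s. t - \<delta> < s \<and> s \<le> t \<longrightarrow> P s"
  shows "eventually P (at_left t)"
  unfolding eventually_at_left_field using assms by (intro exI[of _ "t - \<delta>"]) auto

lemma eventually_at_rightI_real:
  fixes t \<delta> :: real
  assumes "\<delta> > 0" "\<forall>s. t < s \<and> s \<le> t + \<delta> \<longrightarrow> P s"
  shows "eventually P (at_right t)"
  unfolding eventually_at_right_field using assms by (intro exI[of _ "t + \<delta>"]) auto

lemma partial_run_left_const: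
  assumes "partial_run n cen E f g U loc" "u \<in> U" "0 < t"
  shows "\<forall>\<^sub>F s in at_left t. loc u s = loc u t"
proof -
  have "\<forall>u\<in>U. \<forall>t>0. \<exists>\<delta>>0. \<forall>s. t - \<delta> < s \<and> s \<le> t \<longrightarrow> loc u s = loc u t"
    using assms(1) unfolding partial_run_def by (elim conjE)
  from this[rule_format, OF assms(2,3)] show ?thesis
    by (elim exE conjE) (rule eventually_at_leftI_real)
qed

lemma partial_run_right:
  assumes "partial_run n cen E f g U loc" "u \<in> U" "0 \<le> t"
  shows "\<forall>\<^sub>F s in at_right t.
    (if \<exists>j. at_link cen E f g (loc u t) t j \<and> (\<forall>v\<in>U. loc v t \<noteq> j)
     then at_link cen E f g (loc u t) t (loc u s) \<and> (\<forall>v\<in>U. loc v t \<noteq> loc u s)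
     else loc u s = loc u t)"
proof -
  have "\<forall>u\<in>U. \<forall>t\<ge>0. \<exists>\<delta>>0. \<forall>s. t < s \<and> s \<le> t + \<delta> \<longrightarrow>
    (if \<exists>j. at_link cen E f g (loc u t) t j \<and> (\<forall>v\<in>U. loc v t \<noteq> j)
     then at_link cen E f g (loc u t) t (loc u s) \<and> (\<forall>v\<in>U. loc v t \<noteq> loc u s)
     else loc u s = loc u t)"
    using assms(1) unfolding partial_run_def by (elim conjE)
  from this[rule_format, OF assms(2,3)] show ?thesis
    by (elim exE conjE) (rule eventually_at_rightI_real)
qed

lemma partial_run_shift:
  assumes "scs n cen \<epsilon> E f g" "partial_run n cen E f g U loc" "u \<in> U" "0 \<le> t"
    and "at_link cen E f g (loc u t) t j" "\<forall>v\<in>U. loc v t \<noteq> j"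
  shows "\<forall>\<^sub>F s in at_right t. loc u s = j"
proof -
  have "\<exists>j. at_link cen E f g (loc u t) t j \<and> (\<forall>v\<in>U. loc v t \<noteq> j)"
    using assms(5,6) by blast
  then have "\<forall>\<^sub>F s in at_right t. at_link cen E f g (loc u t) t (loc u s) \<and> (\<forall>v\<in>U. loc v t \<noteq> loc u s)"
    using partial_run_right[OF assms(2-4)] by (simp only: if_P)
  then show ?thesis
    by (rule eventually_mono) (use at_link_unique[OF assms(1) _ assms(5)] in blast)
qed

lemma partial_run_stay:
  assumes "partial_run n cen E f g U loc" "u \<in> U" "0 \<le> t"
    and "\<not> (\<exists>j. at_link cen E f g (loc u t) t j \<and> (\<forall>v\<in>U. loc v t \<noteq> j))"
  shows "\<forall>\<^sub>F s in at_right t. loc u s = loc u t"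
  using partial_run_right[OF assms(1-3)] by (simp only: if_not_P[OF assms(4)])

lemma ring_walk_left_const:
  assumes "ring_walk n cen E f g w t0" "t0 < t"
  shows "\<forall>\<^sub>F s in at_left t. w s = w t"
proof -
  have "\<forall>t>t0. \<exists>\<delta>>0. \<forall>s. t - \<delta> < s \<and> s \<le> t \<longrightarrow> w s = w t"
    using assms(1) unfolding ring_walk_def by (elim conjE)
  from this[rule_format, OF assms(2)] show ?thesis
    by (elim exE conjE) (rule eventually_at_leftI_real)
qed

lemma ring_walk_right:
  assumes "ring_walk n cen E f g w t0" "t0 \<le> t"
  shows "\<forall>\<^sub>F s in at_right t.
    (if \<exists>j. at_link cen E f g (w t) t j then at_link cen E f g (w t) t (w s) else w s = w t)"
proof -
  have "\<forall>t\<ge>t0. \<exists>\<delta>>0. \<forall>s. t < s \<and> s \<le> t + \<delta> \<longrightarrow>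
    (if \<exists>j. at_link cen E f g (w t) t j then at_link cen E f g (w t) t (w s) else w s = w t)"
    using assms(1) unfolding ring_walk_def by (elim conjE)
  from this[rule_format, OF assms(2)] show ?thesis
    by (elim exE conjE) (rule eventually_at_rightI_real)
qed

lemma ring_walk_shift:
  assumes "scs n cen \<epsilon> E f g" "ring_walk n cen E f g w t0" "t0 \<le> t"
    and "at_link cen E f g (w t) t j"
  shows "\<forall>\<^sub>F s in at_right t. w s = j"
proof -
  have "\<exists>j. at_link cen E f g (w t) t j"
    using assms(4) by blast
  then have "\<forall>\<^sub>F s in at_right t. at_link cen E f g (w t) t (w s)"
    using ring_walk_right[OF assms(2,3)] by (simp only: if_P)
  then show ?thesis
    by (rule eventually_mono) (rule at_link_unique[OF assms(1) _ assms(4)])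
qed

lemma ring_walk_stay:
  assumes "ring_walk n cen E f g w t0" "t0 \<le> t" "\<not> (\<exists>j. at_link cen E f g (w t) t j)"
  shows "\<forall>\<^sub>F s in at_right t. w s = w t"
  using ring_walk_right[OF assms(1,2)] by (simp only: if_not_P[OF assms(3)])

lemma starving_follows_ring_walk:
  assumes scs: "scs n cen \<epsilon> E f g" and run: "partial_run n cen E f g U loc"
    and u: "u \<in> U" and starving: "starving cen E f g U loc u"
    and walk: "ring_walk n cen E f g w t0" and start: "w t0 = loc u t0"
    and "0 \<le> t0" "t0 \<le> T"
  shows "loc u T = w T"
proof (rule real_interval_induct[where P = "\<lambda>s. loc u s = w s", OF \<open>t0 \<le> T\<close>])
  show "loc u t0 = w t0"
    using start by simp
next
  fix t
  assume "t0 < t" and before: "\<forall>\<^sub>F s in at_left t. loc u s = w s"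
  have "\<forall>\<^sub>F s in at_left t. loc u s = loc u t" "\<forall>\<^sub>F s in at_left t. w s = w t"
    using partial_run_left_const[OF run u] ring_walk_left_const[OF walk] \<open>0 \<le> t0\<close> \<open>t0 < t\<close>
    by auto
  with before have "\<forall>\<^sub>F s in at_left t. loc u s = w s \<and> loc u s = loc u t \<and> w s = w t"
    by eventually_elim simp
  then show "loc u t = w t"
    using eventually_happens'[OF trivial_limit_at_left_real] by force
next
  fix t
  assume "t0 \<le> t" and same: "loc u t = w t"
  with \<open>0 \<le> t0\<close> have "0 \<le> t"
    by simp
  show "\<forall>\<^sub>F s in at_right t. loc u s = w s"
  proof (cases "\<exists>j. at_link cen E f g (w t) t j")
    case True
    then obtain j where j: "at_link cen E f g (loc u t) t j"
      using same by auto
    moreover have "\<forall>v\<in>U. loc v t \<noteq> j"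
      using starving j \<open>0 \<le> t\<close> unfolding starving_def by blast
    ultimately have "\<forall>\<^sub>F s in at_right t. loc u s = j"
      by (rule partial_run_shift[OF scs run u \<open>0 \<le> t\<close>])
    moreover have "\<forall>\<^sub>F s in at_right t. w s = j"
      using ring_walk_shift[OF scs walk \<open>t0 \<le> t\<close>] j same by simp
    ultimately show ?thesis
      by eventually_elim simp
  next
    case False
    then have "\<forall>\<^sub>F s in at_right t. loc u s = loc u t"
      using partial_run_stay[OF run u \<open>0 \<le> t\<close>] same by auto
    moreover have "\<forall>\<^sub>F s in at_right t. w s = w t"
      using ring_walk_stay[OF walk \<open>t0 \<le> t\<close> False] .
    ultimately show ?thesis
      by eventually_elim (simp add: same)
  qed
qed

lemma ring_walk_stays_occupied:
  assumes scs: "scs n cen \<epsilon> E f g" and run: "partial_run n cen E f g U loc"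
    and "u \<in> U" and walk: "ring_walk n cen E f g w t0" and start: "w t0 = loc u t0"
    and "0 \<le> t0" "t0 \<le> T"
  shows "\<exists>v\<in>U. loc v T = w T"
proof (rule real_interval_induct[where P = "\<lambda>s. \<exists>v\<in>U. loc v s = w s", OF \<open>t0 \<le> T\<close>])
  show "\<exists>v\<in>U. loc v t0 = w t0"
    using \<open>u \<in> U\<close> start by auto
next
  fix t
  assume "t0 < t" and before: "\<forall>\<^sub>F s in at_left t. \<exists>v\<in>U. loc v s = w s"
  have "finite U"
    using run by (simp add: partial_run_def)
  then have "\<forall>\<^sub>F s in at_left t. \<forall>v\<in>U. loc v s = loc v t"
    using partial_run_left_const[OF run] \<open>0 \<le> t0\<close> \<open>t0 < t\<close> by (simp add: eventually_ball_finite)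
  moreover have "\<forall>\<^sub>F s in at_left t. w s = w t"
    using ring_walk_left_const[OF walk \<open>t0 < t\<close>] .
  ultimately have "\<forall>\<^sub>F s in at_left t.
      (\<exists>v\<in>U. loc v s = w s) \<and> (\<forall>v\<in>U. loc v s = loc v t) \<and> w s = w t"
    using before by eventually_elim simp
  then show "\<exists>v\<in>U. loc v t = w t"
    using eventually_happens'[OF trivial_limit_at_left_real] by force
next
  fix t
  assume "t0 \<le> t" and "\<exists>v\<in>U. loc v t = w t"
  then obtain v where v: "v \<in> U" "loc v t = w t"
    by blast
  from \<open>0 \<le> t0\<close> \<open>t0 \<le> t\<close> have "0 \<le> t"
    by simp
  show "\<forall>\<^sub>F s in at_right t. \<exists>v\<in>U. loc v s = w s"
  proof (cases "\<exists>j. at_link cen E f g (w t) t j")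
    case True
    then obtain b where b: "at_link cen E f g (loc v t) t b"
      using v by auto
    have walk_to_b: "\<forall>\<^sub>F s in at_right t. w s = b"
      using ring_walk_shift[OF scs walk \<open>t0 \<le> t\<close>] b v by simp
    show ?thesis
    proof (cases "\<forall>x\<in>U. loc x t \<noteq> b")
      case True
      with b have "\<forall>\<^sub>F s in at_right t. loc v s = b"
        by (rule partial_run_shift[OF scs run v(1) \<open>0 \<le> t\<close>])
      with walk_to_b show ?thesis
        by eventually_elim (use v(1) in auto)
    next
      case False
      then obtain v' where v': "v' \<in> U" "loc v' t = b"
        by blast
      \<comment> \<open>the only partner of \<open>v'\<close> at time \<open>t\<close> is the circle of \<open>v\<close>, which is occupied\<close>
      have "\<not> (\<exists>j. at_link cen E f g (loc v' t) t j \<and> (\<forall>x\<in>U. loc x t \<noteq> j))"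
        using at_link_unique[OF scs at_link_sym[OF scs b]] v v' by auto
      then have "\<forall>\<^sub>F s in at_right t. loc v' s = b"
        using partial_run_stay[OF run v'(1) \<open>0 \<le> t\<close>] v'(2) by simp
      with walk_to_b show ?thesis
        by eventually_elim (use v'(1) in auto)
    qed
  next
    case False
    then have "\<forall>\<^sub>F s in at_right t. loc v s = loc v t"
      using partial_run_stay[OF run v(1) \<open>0 \<le> t\<close>] v(2) by auto
    moreover have "\<forall>\<^sub>F s in at_right t. w s = w t"
      using ring_walk_stay[OF walk \<open>t0 \<le> t\<close> False] .
    ultimately show ?thesis
      by eventually_elim (use v in auto)
  qed
qed

lemma path_to_crossing_not_starving:
  assumes scs: "scs n cen \<epsilon> E f g" and run: "partial_run n cen E f g U loc"
    and "0 \<le> t0" and u: "u \<in> U" and u': "u' \<in> U"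
    and path: "path_to_crossing n cen E f g r (loc u t0) t0 L i j"
    and path': "path_to_crossing n cen E f g r' (loc u' t0) t0 L j i"
  shows "\<not> starving cen E f g U loc u"
proof
  assume starving: "starving cen E f g U loc u"
  define T where "T = t0 + L / (2 * pi)"
  have "t0 \<le> T"
    using path by (simp add: path_to_crossing_def T_def)
  obtain w where w: "ring_walk n cen E f g w t0" "w t0 = loc u t0" "w T = i"
    and link: "at_link cen E f g i T j"
    using path unfolding path_to_crossing_def T_def by blast
  obtain w' where w': "ring_walk n cen E f g w' t0" "w' t0 = loc u' t0" "w' T = j"
    using path' unfolding path_to_crossing_def T_def by blast
  have "loc u T = i"
    using starving_follows_ring_walk[OF scs run u starving w(1,2) \<open>0 \<le> t0\<close> \<open>t0 \<le> T\<close>] w(3)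
    by simp
  then have "\<forall>v\<in>U. loc v T \<noteq> j"
    using starving link \<open>0 \<le> t0\<close> \<open>t0 \<le> T\<close> unfolding starving_def by auto
  moreover have "\<exists>v\<in>U. loc v T = j"
    using ring_walk_stays_occupied[OF scs run u' w'(1,2) \<open>0 \<le> t0\<close> \<open>t0 \<le> T\<close>] w'(3) by simp
  ultimately show False
    by blast
qed

theorem lemma5:
  fixes n m :: nat and cen :: "nat \<Rightarrow> complex" and \<epsilon> :: real
    and E :: "nat \<Rightarrow> nat \<Rightarrow> bool" and f :: "nat \<Rightarrow> real" and g :: "nat \<Rightarrow> int"
    and U :: "'r set" and loc :: "'r \<Rightarrow> real \<Rightarrow> nat"
    and r r' :: "complex set" and i j :: nat and c :: complex
    and u u' :: 'r and t0 L :: real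
  assumes "partial_scs m n cen \<epsilon> E f g U loc"
    and "is_ring n cen E f g r" and "is_ring n cen E f g r'"
    and "rings_cross_at n cen E f g r r' i j c"
    and "t0 \<ge> 0" and "u \<in> U" and "u' \<in> U"
    and "rpos cen f g (loc u t0) t0 \<in> r" and "rpos cen f g (loc u' t0) t0 \<in> r'"
    and "path_to_crossing n cen E f g r (loc u t0) t0 L i j"
    and "path_to_crossing n cen E f g r' (loc u' t0) t0 L j i"
  shows "\<not> starving cen E f g U loc u \<and> \<not> starving cen E f g U loc u'"
proof -
  have scs: "scs n cen \<epsilon> E f g" and run: "partial_run n cen E f g U loc"
    using assms(1) by (auto simp: partial_scs_def)
  show ?thesis
    using path_to_crossing_not_starving[OF scs run assms(5,6,7,10,11)]
      path_to_crossing_not_starving[OF scs run assms(5,7,6,11,10)]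
    by blast
qed

end
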